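(* Let $q$ be a prime power and $m\ge1$. For every Reed–Solomon code $\mathcal{C}$ over $\mathbb{F}_{q^m}$, every generalized subfield subcode of $\mathcal{C}$ is an alternant code over $\mathbb{F}_q$ (defined from a generalized Reed–Solomon code over $\mathbb{F}_{q^m}$); conversely, every such alternant code is a generalized subfield subcode of some Reed–Solomon code over $\mathbb{F}_{q^m}$. That is, the generalized subfield subcodes of Reed–Solomon codes are exactly the alternant codes.
   Context: Reed–Solomon code: for $1\le k\le n$ and pairwise distinct $a_1,\dots,a_n\in\mathbb{F}_{q^m}$, $RS_k(a)=\{(g(a_1),\dots,g(a_n)) : g\in\mathbb{F}_{q^m}[X],\ \deg g<k\}$. Generalized Reed–Solomon code: the image of a Reed–Solomon code under right multiplication by an $n\times n$ monomial matrix over $\mathbb{F}_{q^m}$, i.e. $\{(v_1g(a_1),\dots,v_ng(a_n)):\deg g<k\}$ with all $v_i\neq0$. Alternant code: $\mathcal{D}\cap\mathbb{F}_q^n$ for a generalized Reed–Solomon code $\mathcal{D}$ over $\mathbb{F}_{q^m}$. Generalized subfield subcode: for a basis $\mathcal{B}=(b_1,\dots,b_m)$ of $\mathbb{F}_{q^m}$ over $\mathbb{F}_q$, let $\phi_{\mathcal{B}}(\sum_i x_ib_i)=(x_1,\dots,x_m)$ and $Im_q(\mathcal{C})=\{(\phi_{\mathcal{B}}(c_1)|\cdots|\phi_{\mathcal{B}}(c_n)):c\in\mathcal{C}\}\subseteq(\mathbb{F}_q^m)^n$. For $f=(f_1,\dots,f_n)\in GL_q(m)^n$ (the $\mathbb{F}_q$-linear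 automorphisms of $\mathbb{F}_q^m$) and a permutation $\pi$ of $\{1,\dots,n\}$, $mon=\pi\circ f$ applies $f_i$ to the $i$-th block and then permutes blocks by $\pi$. For $u\in\{1,\dots,m\}^n$ and $D\subseteq(\mathbb{F}_q^m)^n$, with $x_{j,l}$ the $l$-th coordinate of block $j$, $S_u(D)=\{(x_{1,u_1},\dots,x_{n,u_n}):x\in D,\ x_{j,l}=0\ \forall j,\forall l\ne u_j\}$. The generalized subfield subcodes of $\mathcal{C}$ are the codes $S_u(mon(Im_q(\mathcal{C})))$ for all choices of $\mathcal{B},u,f,\pi$. *)

theory Defs
  imports "HOL-Computational_Algebra.Polynomial" "HOL-Combinatorics.Permutations"
begin

text \<open>The big field F_{q^m} is a finite field type 'a; F_q is a subfield K of it.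
Vectors/codewords are lists; codes are sets of lists.\<close>

definition is_subfield :: "'a::field set \<Rightarrow> bool" where
  "is_subfield K \<longleftrightarrow> 0 \<in> K \<and> 1 \<in> K \<and> (\<forall>x\<in>K. \<forall>y\<in>K. x + y \<in> K \<and> x * y \<in> K)
     \<and> (\<forall>x\<in>K. - x \<in> K \<and> inverse x \<in> K)"

definition RS :: "'a::field list \<Rightarrow> nat \<Rightarrow> 'a list set" where
  "RS a k = {map (poly g) a | g. degree g < k}"

definition is_RS :: "nat \<Rightarrow> 'a::field list set \<Rightarrow> bool" where
  "is_RS n C \<longleftrightarrow> (\<exists>a k. length a = n \<and> distinct a \<and> 1 \<le> k \<and> k \<le> n \<and> C = RS a k)"

definition GRS :: "'a::field list \<Rightarrow> 'a list \<Rightarrow> nat \<Rightarrow> 'a list set" where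
  "GRS a v k = {map2 (*) v (map (poly g) a) | g. degree g < k}"

definition is_GRS :: "nat \<Rightarrow> 'a::field list set \<Rightarrow> bool" where
  "is_GRS n D \<longleftrightarrow> (\<exists>a v k. length a = n \<and> distinct a \<and> 1 \<le> k \<and> k \<le> n
      \<and> length v = n \<and> 0 \<notin> set v \<and> D = GRS a v k)"

definition alternant :: "'a set \<Rightarrow> 'a list set \<Rightarrow> 'a list set" where
  "alternant K D = {c \<in> D. set c \<subseteq> K}"

definition Kvecs :: "'a set \<Rightarrow> nat \<Rightarrow> 'a list set" where
  "Kvecs K m = {x. length x = m \<and> set x \<subseteq> K}"

definition is_basis :: "'a::field set \<Rightarrow> nat \<Rightarrow> 'a list \<Rightarrow> bool" where
  "is_basis K m B \<longleftrightarrow> length B = m \<and>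
     (\<forall>x. \<exists>!c. c \<in> Kvecs K m \<and> x = (\<Sum>i<m. c ! i * B ! i))"

definition phi :: "'a::field set \<Rightarrow> 'a list \<Rightarrow> 'a \<Rightarrow> 'a list" where
  "phi K B x = (THE c. c \<in> Kvecs K (length B) \<and> x = (\<Sum>i<length B. c ! i * B ! i))"

text \<open>Im_q(C): codewords expanded blockwise; an element of (F_q^m)^n is a list of n blocks.\<close>
definition Im_q :: "'a::field set \<Rightarrow> 'a list \<Rightarrow> 'a list set \<Rightarrow> 'a list list set" where
  "Im_q K B C = {map (phi K B) c | c. c \<in> C}"

text \<open>GL_q(m): F_q-linear automorphisms of F_q^m (only their action on Kvecs K m matters).\<close>
definition is_GL :: "'a::field set \<Rightarrow> nat \<Rightarrow> ('a list \<Rightarrow> 'a list) \<Rightarrow> bool" where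
  "is_GL K m g \<longleftrightarrow> bij_betw g (Kvecs K m) (Kvecs K m)
     \<and> (\<forall>x\<in>Kvecs K m. \<forall>y\<in>Kvecs K m. g (map2 (+) x y) = map2 (+) (g x) (g y))
     \<and> (\<forall>c\<in>K. \<forall>x\<in>Kvecs K m. g (map ((*) c) x) = map ((*) c) (g x))"

text \<open>mon = pi o f: apply f_i to block i, then move block i to position pi(i) (0-indexed).\<close>
definition mon :: "nat \<Rightarrow> (nat \<Rightarrow> 'a list \<Rightarrow> 'a list) \<Rightarrow> (nat \<Rightarrow> nat) \<Rightarrow> 'a list list set \<Rightarrow> 'a list list set" where
  "mon n f \<pi> X = {map (\<lambda>j. f (inv \<pi> j) (x ! (inv \<pi> j))) [0..<n] | x. x \<in> X}"

text \<open>S_u(D), with u j < m the selected (0-indexed) coordinate of block j.\<close>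
definition S_u :: "nat \<Rightarrow> nat \<Rightarrow> (nat \<Rightarrow> nat) \<Rightarrow> 'a::zero list list set \<Rightarrow> 'a list set" where
  "S_u n m u D = {map (\<lambda>j. x ! j ! u j) [0..<n] | x. x \<in> D \<and>
      (\<forall>j<n. \<forall>l<m. l \<noteq> u j \<longrightarrow> x ! j ! l = 0)}"

definition is_gen_subfield_subcode :: "'a::field set \<Rightarrow> nat \<Rightarrow> nat \<Rightarrow> 'a list set \<Rightarrow> 'a list set \<Rightarrow> bool" where
  "is_gen_subfield_subcode K m n C E \<longleftrightarrow> (\<exists>B u f \<pi>. is_basis K m B \<and> (\<forall>j<n. u j < m)
      \<and> (\<forall>i<n. is_GL K m (f i)) \<and> \<pi> permutes {0..<n}
      \<and> E = S_u n m u (mon n f \<pi> (Im_q K B C)))"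

end

theory Submission
  imports Defs
begin

text \<open>Fix a basis of F_{q^m} over F_q. At every position j the map z \<mapsto> f_j(\<phi>(z)) is an
F_q-linear bijection of F_{q^m} onto F_q^m, so the elements whose image vanishes outside the
selected coordinate u_j form a line F_q w_j, on which that coordinate reads z / w_j. Hence a
generalized subfield subcode of RS_k(a) consists of the words (g(a_{\<pi>^-1 j}) / w_j)_j that lie
in F_q^n: it is the alternant code of the GRS code with permuted points and multipliers 1 / w_j.
Conversely, the alternant code of GRS_k(a, v) arises with \<pi> = id, every u_j the first
coordinate, and f_j multiplication by v_j b, where \<phi>(b) is the first unit vector, since then
w_j = 1 / v_j. A basis exists by counting: the F_q-combinations of d < m independent elements
reach only q^d < q^m elements, so every independent family can be extended.\<close>

definition lincomb :: "'a::field list \<Rightarrow> 'a list \<Rightarrow> 'a" where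
  "lincomb B c = (\<Sum>i<length B. c ! i * B ! i)"

lemma subfieldD:
  assumes "is_subfield K"
  shows subfield_zero: "0 \<in> K" and subfield_one: "1 \<in> K"
    and subfield_add: "x \<in> K \<Longrightarrow> y \<in> K \<Longrightarrow> x + y \<in> K"
    and subfield_mult: "x \<in> K \<Longrightarrow> y \<in> K \<Longrightarrow> x * y \<in> K"
    and subfield_diff: "x \<in> K \<Longrightarrow> y \<in> K \<Longrightarrow> x - y \<in> K"
    and subfield_inverse: "x \<in> K \<Longrightarrow> inverse x \<in> K"
  using assms unfolding is_subfield_def diff_conv_add_uminus by blast+

lemma Kvecs_iff: "c \<in> Kvecs K m \<longleftrightarrow> length c = m \<and> (\<forall>i<m. c ! i \<in> K)"
  unfolding Kvecs_def by (auto simp: in_set_conv_nth subset_iff)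

lemma card_Kvecs: "finite K \<Longrightarrow> card (Kvecs K m) = card K ^ m"
  unfolding Kvecs_def using card_lists_length_eq[of K m] by (simp add: conj_commute)

lemma Kvecs_add:
  "is_subfield K \<Longrightarrow> x \<in> Kvecs K m \<Longrightarrow> y \<in> Kvecs K m \<Longrightarrow> map2 (+) x y \<in> Kvecs K m"
  by (simp add: Kvecs_iff subfield_add)

lemma Kvecs_diff:
  "is_subfield K \<Longrightarrow> x \<in> Kvecs K m \<Longrightarrow> y \<in> Kvecs K m \<Longrightarrow> map2 (-) x y \<in> Kvecs K m"
  by (simp add: Kvecs_iff subfield_diff)

lemma Kvecs_scale:
  "is_subfield K \<Longrightarrow> t \<in> K \<Longrightarrow> x \<in> Kvecs K m \<Longrightarrow> map ((*) t) x \<in> Kvecs K m"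
  by (simp add: Kvecs_iff subfield_mult)

lemma lincomb_add:
  "length x = length B \<Longrightarrow> length y = length B \<Longrightarrow>
    lincomb B (map2 (+) x y) = lincomb B x + lincomb B y"
  unfolding lincomb_def by (simp add: sum.distrib[symmetric] algebra_simps)

lemma lincomb_diff:
  "length x = length B \<Longrightarrow> length y = length B \<Longrightarrow>
    lincomb B (map2 (-) x y) = lincomb B x - lincomb B y"
  unfolding lincomb_def by (simp add: sum_subtractf[symmetric] algebra_simps)

lemma lincomb_scale: "length x = length B \<Longrightarrow> lincomb B (map ((*) t) x) = t * lincomb B x"
  unfolding lincomb_def by (simp add: sum_distrib_left algebra_simps)

lemma lincomb_snoc:
  "length c = Suc (length B) \<Longrightarrow>
    lincomb (B @ [x]) c = lincomb B (take (length B) c) + c ! length B * x"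
  unfolding lincomb_def by (simp add: nth_append)

lemma lincomb_snoc_inj_on:
  assumes sf: "is_subfield K" and inj: "inj_on (lincomb B) (Kvecs K (length B))"
    and x: "x \<notin> lincomb B ` Kvecs K (length B)"
  shows "inj_on (lincomb (B @ [x])) (Kvecs K (Suc (length B)))"
proof (rule inj_onI)
  let ?d = "length B"
  fix c c' assume c: "c \<in> Kvecs K (Suc ?d)" and c': "c' \<in> Kvecs K (Suc ?d)"
    and eq: "lincomb (B @ [x]) c = lincomb (B @ [x]) c'"
  have heads: "take ?d c \<in> Kvecs K ?d" "take ?d c' \<in> Kvecs K ?d"
    using c c' by (auto simp: Kvecs_iff)
  have lasts: "c ! ?d \<in> K" "c' ! ?d \<in> K" using c c' by (auto simp: Kvecs_iff)
  have diff: "(c' ! ?d - c ! ?d) * x = lincomb B (map2 (-) (take ?d c) (take ?d c'))"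
    using eq c c' by (simp add: lincomb_snoc lincomb_diff Kvecs_iff algebra_simps)
  have "c ! ?d = c' ! ?d"
  proof (rule ccontr)
    assume ne: "c ! ?d \<noteq> c' ! ?d"
    define s where "s = inverse (c' ! ?d - c ! ?d)"
    define y where "y = map ((*) s) (map2 (-) (take ?d c) (take ?d c'))"
    have "lincomb B y = s * ((c' ! ?d - c ! ?d) * x)"
      unfolding y_def diff using c c' by (simp add: lincomb_scale Kvecs_iff del: map_map)
    then have "x = lincomb B y" using ne by (simp add: s_def)
    moreover have "y \<in> Kvecs K ?d"
      unfolding y_def s_def
      using heads lasts by (intro Kvecs_scale Kvecs_diff sf subfield_inverse subfield_diff)
    ultimately show False using x by blast
  qed
  moreover have "take ?d c = take ?d c'"
    using inj_onD[OF inj _ heads] eq calculation c c' by (simp add: lincomb_snoc Kvecs_iff)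
  moreover have "v = take ?d v @ [v ! ?d]" if "v \<in> Kvecs K (Suc ?d)" for v
    using that take_Suc_conv_app_nth[of ?d v] by (simp add: Kvecs_iff)
  ultimately show "c = c'" using c c' by metis
qed

lemma exists_lincomb_inj_on:
  fixes K :: "'a::{field,finite} set"
  assumes sf: "is_subfield K" and card: "card (UNIV :: 'a set) = card K ^ m" and "d \<le> m"
  shows "\<exists>B. length B = d \<and> inj_on (lincomb B) (Kvecs K d)"
  using \<open>d \<le> m\<close>
proof (induction d)
  case 0
  show ?case by (auto simp: Kvecs_iff inj_on_def)
next
  case (Suc d)
  then obtain B where B: "length B = d" "inj_on (lincomb B) (Kvecs K d)" by auto
  have "card {0::'a, 1} \<le> card K"
    by (rule card_mono) (auto simp: subfield_zero[OF sf] subfield_one[OF sf])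
  then have "card (lincomb B ` Kvecs K d) < card (UNIV :: 'a set)"
    using B card Suc.prems by (simp add: card_image card_Kvecs power_strict_increasing)
  then obtain x where "x \<notin> lincomb B ` Kvecs K d" by (metis UNIV_I subsetI card_seteq
        finite less_irrefl less_imp_le)
  then show ?case
    using lincomb_snoc_inj_on[OF sf, of B x] B by (intro exI[of _ "B @ [x]"]) simp
qed

lemma is_basisI:
  assumes "length B = m" and "bij_betw (lincomb B) (Kvecs K m) UNIV"
  shows "is_basis K m B"
  unfolding is_basis_def
proof (intro conjI allI assms(1))
  fix x
  obtain c where "c \<in> Kvecs K m" "x = lincomb B c"
    using bij_betw_imp_surj_on[OF assms(2)] by (metis UNIV_I imageE)
  with bij_betw_imp_inj_on[OF assms(2)] have "\<exists>!c. c \<in> Kvecs K m \<and> x = lincomb B c"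
    by (auto dest: inj_onD)
  then show "\<exists>!c. c \<in> Kvecs K m \<and> x = (\<Sum>i<m. c ! i * B ! i)"
    using assms(1) by (simp add: lincomb_def)
qed

lemma exists_basis:
  fixes K :: "'a::{field,finite} set"
  assumes "is_subfield K" and card: "card (UNIV :: 'a set) = card K ^ m"
  shows "\<exists>B. is_basis K m B"
proof -
  obtain B where B: "length B = m" "inj_on (lincomb B) (Kvecs K m)"
    using exists_lincomb_inj_on[OF assms order_refl] by blast
  then have "lincomb B ` Kvecs K m = UNIV"
    using card by (intro card_subset_eq) (auto simp: card_image card_Kvecs)
  then show ?thesis using B is_basisI[of B m K] by (auto simp: bij_betw_def)
qed

lemma
  assumes "is_basis K m B"
  shows phi_in_Kvecs: "phi K B x \<in> Kvecs K m"
    and lincomb_phi: "lincomb B (phi K B x) = x"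
  using theI'[of "\<lambda>c. c \<in> Kvecs K m \<and> x = lincomb B c"] assms
  unfolding is_basis_def phi_def lincomb_def by auto

lemma phi_lincomb: "is_basis K m B \<Longrightarrow> c \<in> Kvecs K m \<Longrightarrow> phi K B (lincomb B c) = c"
  unfolding is_basis_def phi_def lincomb_def by (rule the1_equality) auto

lemma inj_phi: "is_basis K m B \<Longrightarrow> inj (phi K B)"
  by (metis injI lincomb_phi)

lemma phi_add:
  assumes sf: "is_subfield K" and B: "is_basis K m B"
  shows "phi K B (x + y) = map2 (+) (phi K B x) (phi K B y)"
proof -
  have "length (phi K B z) = length B" for z
    using phi_in_Kvecs[OF B] B by (simp add: Kvecs_iff is_basis_def)
  then have "x + y = lincomb B (map2 (+) (phi K B x) (phi K B y))"
    by (simp add: lincomb_add lincomb_phi[OF B])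
  then show ?thesis by (simp add: phi_lincomb[OF B] Kvecs_add[OF sf] phi_in_Kvecs[OF B])
qed

lemma phi_scale:
  assumes sf: "is_subfield K" and B: "is_basis K m B" and t: "t \<in> K"
  shows "phi K B (t * x) = map ((*) t) (phi K B x)"
proof -
  have "length (phi K B x) = length B"
    using phi_in_Kvecs[OF B] B by (simp add: Kvecs_iff is_basis_def)
  then have "t * x = lincomb B (map ((*) t) (phi K B x))"
    by (simp add: lincomb_scale lincomb_phi[OF B])
  then show ?thesis by (simp add: phi_lincomb[OF B] Kvecs_scale[OF sf t] phi_in_Kvecs[OF B])
qed

definition supported_on :: "nat \<Rightarrow> nat \<Rightarrow> 'a::zero list \<Rightarrow> bool" where
  "supported_on m u x \<longleftrightarrow> (\<forall>l<m. l \<noteq> u \<longrightarrow> x ! l = 0)"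

definition unit_vec :: "nat \<Rightarrow> nat \<Rightarrow> 'a::zero_neq_one list" where
  "unit_vec m u = map (\<lambda>l. if l = u then 1 else 0) [0..<m]"

lemma unit_vec_in_Kvecs: "is_subfield K \<Longrightarrow> unit_vec m u \<in> Kvecs K m"
  by (simp add: unit_vec_def Kvecs_iff subfield_zero subfield_one)

lemma supported_on_iff_scaled_unit_vec:
  fixes x :: "'a::semiring_1 list"
  assumes "length x = m" and "u < m"
  shows "supported_on m u x \<longleftrightarrow> x = map ((*) (x ! u)) (unit_vec m u)"
proof
  assume "supported_on m u x"
  then show "x = map ((*) (x ! u)) (unit_vec m u)"
    using assms by (intro nth_equalityI) (auto simp: supported_on_def unit_vec_def)
next
  assume "x = map ((*) (x ! u)) (unit_vec m u)"
  then have "x ! l = x ! u * unit_vec m u ! l" if "l < m" for l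
    using that by (metis assms(1) length_map nth_map)
  then show "supported_on m u x"
    by (auto simp: supported_on_def unit_vec_def simp del: nth_map_upt)
qed

lemma preimage_unit_vec_nonzero:
  fixes \<psi> :: "'a::field \<Rightarrow> 'a list"
  assumes sf: "is_subfield K" and "u < m"
    and hom: "\<And>t z. t \<in> K \<Longrightarrow> \<psi> (t * z) = map ((*) t) (\<psi> z)"
    and w: "\<psi> w = unit_vec m u"
  shows "w \<noteq> 0"
proof
  assume "w = 0"
  have p0: "\<psi> 0 = map ((*) 0) (\<psi> 0)" using hom[OF subfield_zero[OF sf], of 0] by simp
  have "\<psi> 0 ! u = 0"
    using arg_cong[OF p0, of "\<lambda>x. x ! u"] \<open>u < m\<close> w \<open>w = 0\<close> by (simp add: unit_vec_def)
  then show False using \<open>u < m\<close> w \<open>w = 0\<close> by (simp add: unit_vec_def)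
qed

lemma supported_on_homogeneous_image:
  fixes \<psi> :: "'a::field \<Rightarrow> 'a list"
  assumes sf: "is_subfield K" and u: "u < m"
    and \<psi>: "\<And>z. \<psi> z \<in> Kvecs K m" and inj: "inj \<psi>"
    and hom: "\<And>t z. t \<in> K \<Longrightarrow> \<psi> (t * z) = map ((*) t) (\<psi> z)"
    and w: "\<psi> w = unit_vec m u"
  shows "supported_on m u (\<psi> z) \<longleftrightarrow> z / w \<in> K"
    and "supported_on m u (\<psi> z) \<Longrightarrow> \<psi> z ! u = z / w"
proof -
  have w0: "w \<noteq> 0" using preimage_unit_vec_nonzero[OF sf u hom w] .
  have line: "\<psi> (t * w) = map ((*) t) (unit_vec m u)" if "t \<in> K" for t
    using hom[OF that] w by simp
  have "z / w \<in> K \<and> \<psi> z ! u = z / w" if "supported_on m u (\<psi> z)"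
  proof -
    have "\<psi> z = \<psi> (\<psi> z ! u * w)"
      using that \<psi>[of z] u line[of "\<psi> z ! u"]
      by (simp add: supported_on_iff_scaled_unit_vec Kvecs_iff)
    then have "z / w = \<psi> z ! u" using inj w0 by (simp add: inj_eq field_simps)
    then show ?thesis using \<psi>[of z] u by (simp add: Kvecs_iff)
  qed
  moreover have "supported_on m u (\<psi> z)" if "z / w \<in> K"
    using line[OF that] w0 u by (simp add: supported_on_def unit_vec_def)
  ultimately show "supported_on m u (\<psi> z) \<longleftrightarrow> z / w \<in> K"
    and "supported_on m u (\<psi> z) \<Longrightarrow> \<psi> z ! u = z / w" by blast+
qed

definition selected_evaluations :: "nat \<Rightarrow> nat \<Rightarrow> (nat \<Rightarrow> nat) \<Rightarrow>
    (nat \<Rightarrow> 'a::comm_ring_1 \<Rightarrow> 'a list) \<Rightarrow> (nat \<Rightarrow> 'a) \<Rightarrow> nat \<Rightarrow> 'a list set"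
  where "selected_evaluations n m u \<psi> p k =
    {map (\<lambda>j. \<psi> j (poly g (p j)) ! u j) [0..<n] | g. degree g < k \<and>
       (\<forall>j<n. supported_on m (u j) (\<psi> j (poly g (p j))))}"

lemma S_u_mon_Im_q_RS:
  assumes a: "length a = n" and \<pi>: "\<pi> permutes {0..<n}"
  shows "S_u n m u (mon n f \<pi> (Im_q K B (RS a k))) =
    selected_evaluations n m u (\<lambda>j z. f (inv \<pi> j) (phi K B z)) (\<lambda>j. a ! inv \<pi> j) k"
proof -
  define X where "X g = map (\<lambda>j. f (inv \<pi> j) (phi K B (poly g (a ! inv \<pi> j)))) [0..<n]" for g
  have inv_\<pi>: "inv \<pi> j < n" if "j < n" for j
    using permutes_in_image[OF permutes_inv[OF \<pi>]] that by simp
  have RS_image: "RS a k = (\<lambda>g. map (poly g) a) ` {g. degree g < k}"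
    by (auto simp: RS_def)
  have Im_q_image: "Im_q K B C = map (phi K B) ` C" for C
    by (auto simp: Im_q_def)
  have mon_image: "mon n f \<pi> Y = (\<lambda>y. map (\<lambda>j. f (inv \<pi> j) (y ! inv \<pi> j)) [0..<n]) ` Y"
    for Y by (auto simp: mon_def)
  have mon: "mon n f \<pi> (Im_q K B (RS a k)) = X ` {g. degree g < k}"
    unfolding RS_image Im_q_image mon_image image_image X_def
    using a inv_\<pi> by (intro image_cong) simp_all
  have X_nth: "X g ! j = f (inv \<pi> j) (phi K B (poly g (a ! inv \<pi> j)))" if "j < n" for g j
    using that by (simp add: X_def)
  show ?thesis
  proof (intro set_eqI iffI)
    fix c assume "c \<in> S_u n m u (mon n f \<pi> (Im_q K B (RS a k)))"
    then obtain g where "degree g < k" "c = map (\<lambda>j. X g ! j ! u j) [0..<n]"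
      and "\<forall>j<n. supported_on m (u j) (X g ! j)"
      unfolding S_u_def mon supported_on_def by blast
    then show "c \<in> selected_evaluations n m u (\<lambda>j z. f (inv \<pi> j) (phi K B z))
        (\<lambda>j. a ! inv \<pi> j) k"
      by (auto simp: selected_evaluations_def X_nth)
  next
    fix c assume "c \<in> selected_evaluations n m u (\<lambda>j z. f (inv \<pi> j) (phi K B z))
        (\<lambda>j. a ! inv \<pi> j) k"
    then obtain g where "degree g < k" "c = map (\<lambda>j. X g ! j ! u j) [0..<n]"
      and "\<forall>j<n. supported_on m (u j) (X g ! j)"
      by (auto simp: selected_evaluations_def X_nth)
    then show "c \<in> S_u n m u (mon n f \<pi> (Im_q K B (RS a k)))"
      unfolding S_u_def mon supported_on_def by blast
  qed
qed

lemma selected_evaluations_eq_alternant: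
  assumes sel: "\<And>j z. j < n \<Longrightarrow> supported_on m (u j) (\<psi> j z) \<longleftrightarrow> z / w j \<in> K"
    and coord: "\<And>j z. j < n \<Longrightarrow> supported_on m (u j) (\<psi> j z) \<Longrightarrow> \<psi> j z ! u j = z / w j"
  shows "selected_evaluations n m u \<psi> p k =
         alternant K (GRS (map p [0..<n]) (map (\<lambda>j. inverse (w j)) [0..<n]) k)"
proof -
  have GRS_word: "map2 (*) (map (\<lambda>j. inverse (w j)) [0..<n]) (map (poly g) (map p [0..<n])) =
      map (\<lambda>j. poly g (p j) / w j) [0..<n]" for g
    by (intro nth_equalityI) (simp_all add: divide_inverse mult.commute)
  have selected_word:
    "map (\<lambda>j. \<psi> j (poly g (p j)) ! u j) [0..<n] = map (\<lambda>j. poly g (p j) / w j) [0..<n]"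
    if "\<forall>j<n. supported_on m (u j) (\<psi> j (poly g (p j)))" for g
    using that coord by simp
  show ?thesis
  proof (intro set_eqI iffI)
    fix c assume "c \<in> selected_evaluations n m u \<psi> p k"
    then obtain g where "degree g < k" "\<forall>j<n. supported_on m (u j) (\<psi> j (poly g (p j)))"
      and "c = map (\<lambda>j. poly g (p j) / w j) [0..<n]"
      using selected_word unfolding selected_evaluations_def by blast
    then show "c \<in> alternant K (GRS (map p [0..<n]) (map (\<lambda>j. inverse (w j)) [0..<n]) k)"
      unfolding alternant_def GRS_def GRS_word using sel by (auto simp: set_conv_nth)
  next
    fix c assume "c \<in> alternant K (GRS (map p [0..<n]) (map (\<lambda>j. inverse (w j)) [0..<n]) k)"
    then obtain g where g: "degree g < k" and c: "c = map (\<lambda>j. poly g (p j) / w j) [0..<n]"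
      and "set c \<subseteq> K"
      unfolding alternant_def GRS_def GRS_word by blast
    then have supported: "\<forall>j<n. supported_on m (u j) (\<psi> j (poly g (p j)))"
      using sel by auto
    then have "c = map (\<lambda>j. \<psi> j (poly g (p j)) ! u j) [0..<n]"
      using selected_word c by simp
    then show "c \<in> selected_evaluations n m u \<psi> p k"
      using g supported unfolding selected_evaluations_def by blast
  qed
qed

lemma distinct_permuted_nth:
  assumes "distinct a" and "length a = n" and "\<sigma> permutes {0..<n}"
  shows "distinct (map (\<lambda>j. a ! \<sigma> j) [0..<n])"
proof -
  have "inj_on ((!) a \<circ> \<sigma>) {0..<n}"
    using assms permutes_inj_on[OF assms(3)] permutes_image[OF assms(3)]
    by (intro comp_inj_on) (auto intro: inj_on_nth)
  then show ?thesis by (simp add: distinct_map comp_def)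
qed

lemma is_GL_coordinates_mult:
  assumes sf: "is_subfield K" and B: "is_basis K m B" and s: "s \<noteq> 0"
  shows "is_GL K m (\<lambda>x. phi K B (s * lincomb B x))"
  unfolding is_GL_def
proof (intro conjI ballI)
  have len: "length x = length B" if "x \<in> Kvecs K m" for x
    using that B by (simp add: Kvecs_iff is_basis_def)
  show "bij_betw (\<lambda>x. phi K B (s * lincomb B x)) (Kvecs K m) (Kvecs K m)"
    by (rule bij_betw_byWitness[where f' = "\<lambda>y. phi K B (lincomb B y / s)"])
      (use s in \<open>auto simp: phi_lincomb[OF B] lincomb_phi[OF B] phi_in_Kvecs[OF B]\<close>)
  fix x y assume x: "x \<in> Kvecs K m" and y: "y \<in> Kvecs K m"
  show "phi K B (s * lincomb B (map2 (+) x y)) =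
      map2 (+) (phi K B (s * lincomb B x)) (phi K B (s * lincomb B y))"
    using len[OF x] len[OF y] by (simp add: lincomb_add distrib_left phi_add[OF sf B])
next
  fix t x assume t: "t \<in> K" and x: "x \<in> Kvecs K m"
  have eq: "s * lincomb B (map ((*) t) x) = t * (s * lincomb B x)"
    using x B by (simp add: lincomb_scale Kvecs_iff is_basis_def)
  show "phi K B (s * lincomb B (map ((*) t) x)) = map ((*) t) (phi K B (s * lincomb B x))"
    unfolding eq by (rule phi_scale[OF sf B t])
qed

lemma
  assumes sf: "is_subfield K" and B: "is_basis K m B" and g: "is_GL K m g"
  shows GL_phi_in_Kvecs: "g (phi K B z) \<in> Kvecs K m"
    and inj_GL_phi: "inj (\<lambda>z. g (phi K B z))"
    and GL_phi_scale: "t \<in> K \<Longrightarrow> g (phi K B (t * z)) = map ((*) t) (g (phi K B z))"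
    and GL_phi_surj: "y \<in> Kvecs K m \<Longrightarrow> \<exists>z. g (phi K B z) = y"
proof -
  have bij: "bij_betw g (Kvecs K m) (Kvecs K m)" using g by (simp add: is_GL_def)
  show "g (phi K B z) \<in> Kvecs K m"
    using bij_betw_apply[OF bij phi_in_Kvecs[OF B]] .
  show "inj (\<lambda>z. g (phi K B z))"
    using inj_phi[OF B] bij_betw_imp_inj_on[OF bij] phi_in_Kvecs[OF B]
    by (auto simp: inj_def inj_on_def)
  show "t \<in> K \<Longrightarrow> g (phi K B (t * z)) = map ((*) t) (g (phi K B z))"
    using g phi_in_Kvecs[OF B] by (simp add: is_GL_def phi_scale[OF sf B])
  assume "y \<in> Kvecs K m"
  then obtain c where "c \<in> Kvecs K m" "y = g c"
    using bij_betw_imp_surj_on[OF bij] by blast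
  then show "\<exists>z. g (phi K B z) = y" using phi_lincomb[OF B] by metis
qed

lemma gen_subfield_subcode_of_RS_is_alternant:
  assumes sf: "is_subfield K" and "is_RS n C" and "is_gen_subfield_subcode K m n C E"
  shows "\<exists>D. is_GRS n D \<and> E = alternant K D"
proof -
  obtain a k where a: "length a = n" "distinct a" and k: "1 \<le> k" "k \<le> n" and C: "C = RS a k"
    using \<open>is_RS n C\<close> by (auto simp: is_RS_def)
  obtain B u f \<pi> where B: "is_basis K m B" and u: "\<forall>j<n. u j < m"
    and f: "\<forall>i<n. is_GL K m (f i)" and \<pi>: "\<pi> permutes {0..<n}"
    and E: "E = S_u n m u (mon n f \<pi> (Im_q K B C))"
    using \<open>is_gen_subfield_subcode K m n C E\<close> by (auto simp: is_gen_subfield_subcode_def)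
  define \<psi> where "\<psi> j z = f (inv \<pi> j) (phi K B z)" for j z
  have GL: "is_GL K m (f (inv \<pi> j))" if "j < n" for j
    using f permutes_in_image[OF permutes_inv[OF \<pi>]] that by simp
  have "\<forall>j<n. \<exists>w. \<psi> j w = unit_vec m (u j)"
    unfolding \<psi>_def using GL_phi_surj[OF sf B GL] unit_vec_in_Kvecs[OF sf] by blast
  then obtain w where w: "\<And>j. j < n \<Longrightarrow> \<psi> j (w j) = unit_vec m (u j)" by metis
  have line: "(supported_on m (u j) (\<psi> j z) \<longleftrightarrow> z / w j \<in> K)
      \<and> (supported_on m (u j) (\<psi> j z) \<longrightarrow> \<psi> j z ! u j = z / w j) \<and> w j \<noteq> 0"
    if "j < n" for j z
  proof -
    note g = GL[OF that] and wj = w[OF that, unfolded \<psi>_def]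
    show ?thesis
      unfolding \<psi>_def using u that
        supported_on_homogeneous_image[OF sf _ GL_phi_in_Kvecs[OF sf B g] inj_GL_phi[OF sf B g]
          GL_phi_scale[OF sf B g] wj]
        preimage_unit_vec_nonzero[OF sf _ GL_phi_scale[OF sf B g] wj]
      by blast
  qed
  define D where "D = GRS (map (\<lambda>j. a ! inv \<pi> j) [0..<n]) (map (\<lambda>j. inverse (w j)) [0..<n]) k"
  have "E = selected_evaluations n m u \<psi> (\<lambda>j. a ! inv \<pi> j) k"
    unfolding E C \<psi>_def using S_u_mon_Im_q_RS[OF a(1) \<pi>] .
  also have "\<dots> = alternant K D"
    unfolding D_def using line by (intro selected_evaluations_eq_alternant) blast+
  finally have "E = alternant K D" .
  moreover have "is_GRS n D"
    unfolding is_GRS_def D_def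
    using a k line distinct_permuted_nth[OF a(2,1) permutes_inv[OF \<pi>]]
    by (intro exI conjI refl) auto
  ultimately show ?thesis by blast
qed

lemma alternant_is_gen_subfield_subcode_of_RS:
  fixes K :: "'a::{field,finite} set"
  assumes sf: "is_subfield K" and m: "1 \<le> m" and card: "card (UNIV :: 'a set) = card K ^ m"
    and "is_GRS n D"
  shows "\<exists>C. is_RS n C \<and> is_gen_subfield_subcode K m n C (alternant K D)"
proof -
  obtain a v k where a: "length a = n" "distinct a" and k: "1 \<le> k" "k \<le> n"
    and v: "length v = n" "0 \<notin> set v" and D: "D = GRS a v k"
    using \<open>is_GRS n D\<close> by (auto simp: is_GRS_def)
  obtain B where B: "is_basis K m B" using exists_basis[OF sf card] by blast
  define b where "b = lincomb B (unit_vec m 0)"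
  have phi_b: "phi K B b = unit_vec m 0"
    unfolding b_def using phi_lincomb[OF B unit_vec_in_Kvecs[OF sf]] .
  have "b \<noteq> 0" using preimage_unit_vec_nonzero[OF sf _ phi_scale[OF sf B] phi_b] m by simp
  define f where "f j x = phi K B (v ! j * b * lincomb B x)" for j x
  have v_nz: "v ! j \<noteq> 0" if "j < n" for j using v that by (metis nth_mem)
  have GL: "is_GL K m (f j)" if "j < n" for j
    unfolding f_def using is_GL_coordinates_mult[OF sf B] v_nz[OF that] \<open>b \<noteq> 0\<close> by simp
  have line: "(supported_on m 0 (f j (phi K B z)) \<longleftrightarrow> z / inverse (v ! j) \<in> K)
      \<and> (supported_on m 0 (f j (phi K B z)) \<longrightarrow> f j (phi K B z) ! 0 = z / inverse (v ! j))"
    if "j < n" for j z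
  proof -
    have "f j (phi K B (inverse (v ! j))) = phi K B (v ! j * b * inverse (v ! j))"
      by (simp add: f_def lincomb_phi[OF B])
    also have "\<dots> = unit_vec m 0" using v_nz[OF that] phi_b by (simp add: field_simps)
    finally have "f j (phi K B (inverse (v ! j))) = unit_vec m 0" .
    then show ?thesis
      using supported_on_homogeneous_image[OF sf _ GL_phi_in_Kvecs[OF sf B GL[OF that]]
          inj_GL_phi[OF sf B GL[OF that]] GL_phi_scale[OF sf B GL[OF that]]] m
      by simp
  qed
  have "S_u n m (\<lambda>_. 0) (mon n f id (Im_q K B (RS a k)))
      = selected_evaluations n m (\<lambda>_. 0) (\<lambda>j z. f j (phi K B z)) ((!) a) k"
    using S_u_mon_Im_q_RS[OF a(1) permutes_id] by (simp add: inv_id)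
  also have "\<dots> = alternant K
      (GRS (map ((!) a) [0..<n]) (map (\<lambda>j. inverse (inverse (v ! j))) [0..<n]) k)"
    using line by (intro selected_evaluations_eq_alternant) blast+
  also have "\<dots> = alternant K D"
    unfolding D inverse_inverse_eq using map_nth[of a] map_nth[of v] a(1) v(1) by simp
  finally have "is_gen_subfield_subcode K m n (RS a k) (alternant K D)"
    unfolding is_gen_subfield_subcode_def using B GL m
    by (intro exI[of _ B] exI[of _ "\<lambda>_. 0"] exI[of _ f] exI[of _ id]) auto
  moreover have "is_RS n (RS a k)" unfolding is_RS_def using a k by blast
  ultimately show ?thesis by blast
qed

theorem corollary3:
  fixes K :: "'a::{field,finite} set" and m :: nat
  assumes "is_subfield K" and "m \<ge> 1" and "card (UNIV :: 'a set) = card K ^ m"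
  shows "(\<forall>n C E. is_RS n C \<and> is_gen_subfield_subcode K m n C E
            \<longrightarrow> (\<exists>D. is_GRS n D \<and> E = alternant K D))
       \<and> (\<forall>n D. is_GRS n D
            \<longrightarrow> (\<exists>C. is_RS n C \<and> is_gen_subfield_subcode K m n C (alternant K D)))"
  using gen_subfield_subcode_of_RS_is_alternant[OF assms(1)]
    alternant_is_gen_subfield_subcode_of_RS[OF assms]
  by blast

end
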